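(* Let $X\subseteq Y$ with $|Y\setminus X|\ge|X|$. Then $\tau_{pp}$ is the only Hausdorff topology $\tau$ on $I(X)$ making $I(X)$ a topological inverse semigroup for which the map $\pi:S_\infty(Y)\to(I(X),\tau)$, $\pi(f)=\widehat f$, is continuous (with $S_\infty(Y)$ carrying the pointwise convergence topology, $Y$ discrete).
   Context: $S_\infty(Y)$ is the group of all bijections $Y\to Y$. $I(X)$ is the set of all bijections $f:A\to B$ with $A,B\subseteq X$ (including the empty map), $\mathrm{dom}(f)=A$, $\mathrm{im}(f)=B$, with composition $\mathrm{dom}(f\circ g)=g^{-1}(\mathrm{dom}(f)\cap\mathrm{im}(g))$ and inversion $f\mapsto f^{-1}$. For $f\in S_\infty(Y)$, $\widehat f$ is the restriction of $f$ to $X\cap f^{-1}(X)$. For $x,y\in X$: $v(x,y)=\{f: x\in\mathrm{dom}(f), f(x)=y\}$, $w_1(x)=\{f: x\notin\mathrm{dom}(f)\}$, $w_2(y)=\{f: y\notin\mathrm{im}(f)\}$; $\tau_{pp}$ is the topology generated by all these sets. A topological inverse semigroup has continuous multiplication and inversion. *)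

theory Defs
  imports "HOL-Analysis.Analysis"
begin

text \<open>Partial bijections on X are modelled as partial maps 'a \<Rightarrow> 'a option.\<close>

definition IX :: "'a set \<Rightarrow> ('a \<Rightarrow> 'a option) set" where
  "IX X = {f. dom f \<subseteq> X \<and> ran f \<subseteq> X \<and> inj_on f (dom f)}"

text \<open>Composition f \<circ> g (first g, then f) is map composition (map_comp);
  its domain is g^{-1}(dom f \<inter> im g).\<close>
definition pmult :: "('a \<Rightarrow> 'a option) \<Rightarrow> ('a \<Rightarrow> 'a option) \<Rightarrow> ('a \<Rightarrow> 'a option)" where
  "pmult f g = f \<circ>\<^sub>m g"

definition pinv :: "('a \<Rightarrow> 'a option) \<Rightarrow> ('a \<Rightarrow> 'a option)" where
  "pinv f = (\<lambda>y. if y \<in> ran f then Some (THE x. f x = Some y) else None)"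

definition vset :: "'a set \<Rightarrow> 'a \<Rightarrow> 'a \<Rightarrow> ('a \<Rightarrow> 'a option) set" where
  "vset X x y = {f \<in> IX X. f x = Some y}"

definition w1set :: "'a set \<Rightarrow> 'a \<Rightarrow> ('a \<Rightarrow> 'a option) set" where
  "w1set X x = {f \<in> IX X. x \<notin> dom f}"

definition w2set :: "'a set \<Rightarrow> 'a \<Rightarrow> ('a \<Rightarrow> 'a option) set" where
  "w2set X y = {f \<in> IX X. y \<notin> ran f}"

text \<open>tau_pp: generated by the subbasis; the whole space I(X) is included
  so that the carrier is I(X) also in the degenerate case X = {}.\<close>
definition tau_pp :: "'a set \<Rightarrow> ('a \<Rightarrow> 'a option) topology" where
  "tau_pp X = topology_generated_by
     (insert (IX X)
       ({vset X x y | x y. x \<in> X \<and> y \<in> X} \<union> {w1set X x | x. x \<in> X} \<union> {w2set X y | y. y \<in> X}))"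

definition Sinf :: "'a set \<Rightarrow> ('a \<Rightarrow> 'a) set" where
  "Sinf Y = {f \<in> extensional Y. bij_betw f Y Y}"

definition Sinf_top :: "'a set \<Rightarrow> ('a \<Rightarrow> 'a) topology" where
  "Sinf_top Y = subtopology (product_topology (\<lambda>_. discrete_topology Y) Y) (Sinf Y)"

definition hat :: "'a set \<Rightarrow> ('a \<Rightarrow> 'a) \<Rightarrow> ('a \<Rightarrow> 'a option)" where
  "hat X f = (\<lambda>x. if x \<in> X \<and> f x \<in> X then Some (f x) else None)"

definition top_inverse_semigroup_IX :: "'a set \<Rightarrow> ('a \<Rightarrow> 'a option) topology \<Rightarrow> bool" where
  "top_inverse_semigroup_IX X T \<longleftrightarrow>
     topspace T = IX X \<and>
     continuous_map (prod_topology T T) T (\<lambda>(f, g). pmult f g) \<and>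
     continuous_map T T pinv"

end

theory Submission
  imports Defs
begin

(*
  The topology tau_pp is Hausdorff and makes I(X) a topological inverse semigroup, and hat is
  continuous for it: "hat f x = y", "x \<notin> dom (hat f)" and "y \<notin> im (hat f)" each depend on
  one value of f or of f^-1 (for the last, f^-1 y \<in> Y - X).

  Conversely, let T be such a topology. For the idempotents e_a = id_{a}, the conditions
  f \<in> v(x,y), f \<in> w_1(x), f \<in> w_2(y) say e_y f e_x \<noteq> 0, f^-1 f e_x \<noteq> e_x, e_y f f^-1 \<noteq> e_y.
  These are preimages of complements of points under maps continuous for T, and points are
  closed in a Hausdorff space, so tau_pp is coarser than T. For the reverse inclusion, an
  injection k : X \<rightarrow> Y - X extends every h \<in> I(X) to a permutation of Y: h on dom h, x \<mapsto> k x
  off dom h, k y \<mapsto> k (h^-1 y) on im h, k y \<mapsto> y off im h, and the identity elsewhere. Its hat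
  is h, and each of its values depends only on one value of h and one of h^-1, so the
  extension is continuous from tau_pp to S_inf(Y), and the identity, being hat composed with
  it, is continuous from tau_pp to T.
*)

section \<open>Partial bijections\<close>

lemma IX_I:
  assumes "\<And>x y. f x = Some y \<Longrightarrow> x \<in> X \<and> y \<in> X"
    and "\<And>x x' y. f x = Some y \<Longrightarrow> f x' = Some y \<Longrightarrow> x = x'"
  shows "f \<in> IX X"
  using assms unfolding IX_def inj_on_def dom_def ran_def by auto

lemma IX_dom_in: "f \<in> IX X \<Longrightarrow> f x = Some y \<Longrightarrow> x \<in> X"
  unfolding IX_def by auto

lemma IX_ran_in: "f \<in> IX X \<Longrightarrow> f x = Some y \<Longrightarrow> y \<in> X"
  unfolding IX_def by (auto simp: ran_def)

lemma IX_outside: "f \<in> IX X \<Longrightarrow> x \<notin> X \<Longrightarrow> f x = None"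
  using IX_dom_in by fastforce

lemma IX_inj:
  assumes "f \<in> IX X" and "f x = Some y" and "f x' = Some y"
  shows "x = x'"
proof (rule inj_onD)
  show "inj_on f (dom f)"
    using assms(1) by (simp add: IX_def)
qed (use assms(2,3) in auto)

lemma pinv_Some:
  assumes "f \<in> IX X"
  shows "pinv f y = Some x \<longleftrightarrow> f x = Some y"
proof (cases "y \<in> ran f")
  case True
  then obtain a where a: "f a = Some y"
    by (auto simp: ran_def)
  then have preimage: "f b = Some y \<longleftrightarrow> b = a" for b
    using IX_inj[OF assms _ a] by blast
  then have "(THE x. f x = Some y) = a"
    by simp
  then show ?thesis
    using True preimage unfolding pinv_def by auto
next
  case False
  then show ?thesis
    unfolding pinv_def by (auto simp: ran_def)
qed

lemma pinv_None: "pinv f y = None \<longleftrightarrow> y \<notin> ran f"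
  unfolding pinv_def by auto

lemma pinv_IX: "f \<in> IX X \<Longrightarrow> pinv f \<in> IX X"
  by (rule IX_I) (auto simp: pinv_Some dest: IX_dom_in IX_ran_in)

lemma ran_pinv: "f \<in> IX X \<Longrightarrow> ran (pinv f) = dom f"
  by (auto simp: ran_def dom_def pinv_Some)

lemma pinv_pinv:
  assumes "f \<in> IX X"
  shows "pinv (pinv f) = f"
proof
  fix x
  show "pinv (pinv f) x = f x"
    by (cases "f x")
      (simp_all add: pinv_None ran_pinv[OF assms] domIff pinv_Some[OF pinv_IX[OF assms]]
        pinv_Some[OF assms])
qed

lemma pmult_Some: "pmult f g x = Some z \<longleftrightarrow> (\<exists>y. g x = Some y \<and> f y = Some z)"
  unfolding pmult_def map_comp_def by (auto split: option.splits)

lemma pmult_None: "pmult f g x = None \<longleftrightarrow> g x = None \<or> (\<exists>y. g x = Some y \<and> f y = None)"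
  unfolding pmult_def map_comp_def by (auto split: option.splits)

lemma pmult_IX: "f \<in> IX X \<Longrightarrow> g \<in> IX X \<Longrightarrow> pmult f g \<in> IX X"
  by (rule IX_I) (auto simp: pmult_Some dest: IX_dom_in IX_ran_in IX_inj)

lemma notin_ran_pmult_iff:
  assumes "f \<in> IX X"
  shows "z \<notin> ran (pmult f g) \<longleftrightarrow> z \<notin> ran f \<or> (\<exists>y. f y = Some z \<and> y \<notin> ran g)"
  using IX_inj[OF assms] unfolding ran_def pmult_Some by blast

section \<open>The topology tau_pp\<close>

lemma topspace_tau_pp [simp]: "topspace (tau_pp X) = IX X"
  unfolding tau_pp_def topology_generated_by_topspace
  by (auto simp: vset_def w1set_def w2set_def)

lemma openin_IX: "openin (tau_pp X) (IX X)"
  using openin_topspace[of "tau_pp X"] by simp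

lemma openin_vset: "x \<in> X \<Longrightarrow> y \<in> X \<Longrightarrow> openin (tau_pp X) (vset X x y)"
  unfolding tau_pp_def by (rule topology_generated_by_Basis) blast

lemma openin_w1set: "x \<in> X \<Longrightarrow> openin (tau_pp X) (w1set X x)"
  unfolding tau_pp_def by (rule topology_generated_by_Basis) blast

lemma openin_w2set: "y \<in> X \<Longrightarrow> openin (tau_pp X) (w2set X y)"
  unfolding tau_pp_def by (rule topology_generated_by_Basis) blast

lemma openin_tau_pp_app_eq: "openin (tau_pp X) {h \<in> IX X. h x = c}"
proof -
  consider "x \<notin> X" | "x \<in> X" "c = None" | y where "x \<in> X" "c = Some y" "y \<in> X"
    | y where "c = Some y" "y \<notin> X"
    by (cases c) auto
  then show ?thesis
  proof cases
    case 1
    then have "{h \<in> IX X. h x = c} = (if c = None then IX X else {})"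
      by (auto simp: IX_outside)
    then show ?thesis
      by (simp add: openin_IX)
  next
    case 2
    then have "{h \<in> IX X. h x = c} = w1set X x"
      by (auto simp: w1set_def)
    then show ?thesis
      using openin_w1set 2(1) by simp
  next
    case (3 y)
    then have "{h \<in> IX X. h x = c} = vset X x y"
      by (auto simp: vset_def)
    then show ?thesis
      using openin_vset 3 by simp
  next
    case (4 y)
    then have "{h \<in> IX X. h x = c} = {}"
      using IX_ran_in by fastforce
    then show ?thesis
      by (metis openin_empty)
  qed
qed

lemma openin_tau_pp_notin_ran: "openin (tau_pp X) {h \<in> IX X. y \<notin> ran h}"
proof (cases "y \<in> X")
  case True
  then show ?thesis
    using openin_w2set by (simp add: w2set_def)
next
  case False
  then have "{h \<in> IX X. y \<notin> ran h} = IX X"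
    using IX_ran_in by (fastforce simp: ran_def)
  then show ?thesis
    by (simp add: openin_IX)
qed

lemma continuous_map_into_tau_pp:
  assumes "\<And>a. a \<in> topspace A \<Longrightarrow> g a \<in> IX X"
    and "\<And>x c. x \<in> X \<Longrightarrow> openin A {a \<in> topspace A. g a x = c}"
    and "\<And>y. y \<in> X \<Longrightarrow> openin A {a \<in> topspace A. y \<notin> ran (g a)}"
  shows "continuous_map A (tau_pp X) g"
  unfolding tau_pp_def
proof (rule continuous_on_generated_topo)
  fix U
  assume "U \<in> insert (IX X) ({vset X x y | x y. x \<in> X \<and> y \<in> X}
    \<union> {w1set X x | x. x \<in> X} \<union> {w2set X y | y. y \<in> X})"
  then consider "U = IX X" | x y where "x \<in> X" "U = vset X x y"
    | x where "x \<in> X" "U = w1set X x" | y where "y \<in> X" "U = w2set X y"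
    by blast
  then show "openin A (g -` U \<inter> topspace A)"
  proof cases
    case 1
    then have "g -` U \<inter> topspace A = topspace A"
      using assms(1) by blast
    then show ?thesis
      by simp
  next
    case (2 x y)
    then have "g -` U \<inter> topspace A = {a \<in> topspace A. g a x = Some y}"
      using assms(1) by (auto simp: vset_def)
    then show ?thesis
      using assms(2) 2(1) by simp
  next
    case (3 x)
    then have "g -` U \<inter> topspace A = {a \<in> topspace A. g a x = None}"
      using assms(1) by (auto simp: w1set_def)
    then show ?thesis
      using assms(2) 3(1) by simp
  next
    case (4 y)
    then have "g -` U \<inter> topspace A = {a \<in> topspace A. y \<notin> ran (g a)}"
      using assms(1) by (auto simp: w2set_def)
    then show ?thesis
      using assms(3) 4(1) by simp
  qed
qed (use assms(1) in auto)

lemma Hausdorff_tau_pp: "Hausdorff_space (tau_pp X)"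
  unfolding Hausdorff_space_def
proof (intro allI impI, elim conjE)
  fix f g
  assume "f \<in> topspace (tau_pp X)" "g \<in> topspace (tau_pp X)" "f \<noteq> g"
  then obtain x where "f x \<noteq> g x"
    by blast
  then show "\<exists>U V. openin (tau_pp X) U \<and> openin (tau_pp X) V \<and> f \<in> U \<and> g \<in> V \<and> disjnt U V"
    using \<open>f \<in> topspace (tau_pp X)\<close> \<open>g \<in> topspace (tau_pp X)\<close>
    by (intro exI[of _ "{h \<in> IX X. h x = f x}"] exI[of _ "{h \<in> IX X. h x = g x}"])
      (auto simp: openin_tau_pp_app_eq disjnt_def)
qed

lemma continuous_map_pmult_tau_pp:
  "continuous_map (prod_topology (tau_pp X) (tau_pp X)) (tau_pp X) (\<lambda>(f, g). pmult f g)"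
proof (rule continuous_map_into_tau_pp)
  let ?P = "prod_topology (tau_pp X) (tau_pp X)"
  let ?app = "\<lambda>x c. {h \<in> IX X. h x = c}"
  have open_Times: "openin ?P (S \<times> T)" if "openin (tau_pp X) S" "openin (tau_pp X) T" for S T
    using that by (simp add: openin_prod_Times_iff)
  have open_apps: "openin ?P (\<Union>y. ?app y c \<times> ?app x (Some y))" for x c
    by (intro openin_Union) (auto intro: open_Times openin_tau_pp_app_eq)
  fix x c
  show "openin ?P {p \<in> topspace ?P. (case p of (f, g) \<Rightarrow> pmult f g) x = c}"
  proof (cases c)
    case None
    have "{p \<in> topspace ?P. (case p of (f, g) \<Rightarrow> pmult f g) x = c}
        = IX X \<times> ?app x None \<union> (\<Union>y. ?app y None \<times> ?app x (Some y))"
      using None by (auto simp: pmult_None) (metis option.distinct(1))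
    moreover have "openin ?P (IX X \<times> ?app x None \<union> (\<Union>y. ?app y None \<times> ?app x (Some y)))"
      by (intro openin_Un open_Times openin_IX openin_tau_pp_app_eq open_apps)
    ultimately show ?thesis
      by (simp only:)
  next
    case (Some z)
    have "{p \<in> topspace ?P. (case p of (f, g) \<Rightarrow> pmult f g) x = c}
        = (\<Union>y. ?app y (Some z) \<times> ?app x (Some y))"
      using Some by (auto simp: pmult_Some)
    then show ?thesis
      using open_apps by (simp only:)
  qed
  fix z
  have "{p \<in> topspace ?P. z \<notin> ran (case p of (f, g) \<Rightarrow> pmult f g)}
      = {h \<in> IX X. z \<notin> ran h} \<times> IX X \<union> (\<Union>y. ?app y (Some z) \<times> {h \<in> IX X. y \<notin> ran h})"
    by (auto simp: notin_ran_pmult_iff) (meson notin_ran_pmult_iff)+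
  moreover have "openin ?P ({h \<in> IX X. z \<notin> ran h} \<times> IX X
      \<union> (\<Union>y. ?app y (Some z) \<times> {h \<in> IX X. y \<notin> ran h}))"
    by (intro openin_Un openin_Union open_Times openin_IX openin_tau_pp_notin_ran)
      (auto intro: open_Times openin_tau_pp_app_eq openin_tau_pp_notin_ran)
  ultimately show "openin ?P {p \<in> topspace ?P. z \<notin> ran (case p of (f, g) \<Rightarrow> pmult f g)}"
    by (simp only:)
qed (auto intro: pmult_IX)

lemma continuous_map_pinv_tau_pp: "continuous_map (tau_pp X) (tau_pp X) pinv"
proof (rule continuous_map_into_tau_pp)
  fix x c
  have "{h \<in> topspace (tau_pp X). pinv h x = c}
      = (case c of None \<Rightarrow> {h \<in> IX X. x \<notin> ran h} | Some y \<Rightarrow> {h \<in> IX X. h y = Some x})"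
    by (auto simp: pinv_None pinv_Some split: option.splits)
  then show "openin (tau_pp X) {h \<in> topspace (tau_pp X). pinv h x = c}"
    by (simp add: openin_tau_pp_app_eq openin_tau_pp_notin_ran split: option.splits)
next
  fix y
  have "{h \<in> topspace (tau_pp X). y \<notin> ran (pinv h)} = {h \<in> IX X. h y = None}"
    by (auto simp: ran_pinv)
  then show "openin (tau_pp X) {h \<in> topspace (tau_pp X). y \<notin> ran (pinv h)}"
    by (simp add: openin_tau_pp_app_eq)
qed (auto intro: pinv_IX)

lemma top_inverse_semigroup_tau_pp: "top_inverse_semigroup_IX X (tau_pp X)"
  by (simp add: top_inverse_semigroup_IX_def continuous_map_pmult_tau_pp continuous_map_pinv_tau_pp)

lemma openin_tau_pp_pinv_eq: "openin (tau_pp X) {h \<in> IX X. pinv h y = c}"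
proof -
  have "openin (tau_pp X) {h \<in> topspace (tau_pp X). pinv h \<in> {h' \<in> IX X. h' y = c}}"
    by (rule openin_continuous_map_preimage[OF continuous_map_pinv_tau_pp openin_tau_pp_app_eq])
  moreover have "{h \<in> topspace (tau_pp X). pinv h \<in> {h' \<in> IX X. h' y = c}} = {h \<in> IX X. pinv h y = c}"
    using pinv_IX by auto
  ultimately show ?thesis
    by metis
qed

section \<open>Topologies of Hausdorff inverse semigroups are finer than tau_pp\<close>

lemma openin_continuous_map_preimage_neq:
  assumes "t1_space T" and "continuous_map A T \<phi>" and "c \<in> topspace T"
  shows "openin A {a \<in> topspace A. \<phi> a \<noteq> c}"
proof -
  have "closedin T {c}"
    using assms(1,3) by (simp add: t1_space_closedin_singleton)
  then have "closedin A {a \<in> topspace A. \<phi> a \<in> {c}}"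
    by (rule closedin_continuous_map_preimage[OF assms(2)])
  then have "openin A (topspace A - {a \<in> topspace A. \<phi> a \<in> {c}})"
    by (rule openin_diff[OF openin_topspace])
  moreover have "topspace A - {a \<in> topspace A. \<phi> a \<in> {c}} = {a \<in> topspace A. \<phi> a \<noteq> c}"
    by blast
  ultimately show ?thesis
    by simp
qed

definition sing_id :: "'a \<Rightarrow> 'a \<Rightarrow> 'a option" where
  "sing_id a = [a \<mapsto> a]"

lemma sing_id_IX: "a \<in> X \<Longrightarrow> sing_id a \<in> IX X"
  by (rule IX_I) (auto simp: sing_id_def split: if_splits)

lemma sandwich_sing_id_eq_empty_iff:
  "pmult (sing_id y) (pmult f (sing_id x)) = Map.empty \<longleftrightarrow> f x \<noteq> Some y"
  unfolding pmult_def sing_id_def map_comp_def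
  by (auto simp: fun_eq_iff split: option.splits)

lemma domain_idempotent_fixes_sing_id_iff:
  assumes "f \<in> IX X"
  shows "pmult (pmult (pinv f) f) (sing_id x) = sing_id x \<longleftrightarrow> f x \<noteq> None"
  unfolding pmult_def sing_id_def map_comp_def
  by (auto simp: fun_eq_iff pinv_Some[OF assms] pinv_None ran_def split: option.splits)

lemma range_idempotent_fixes_sing_id_iff:
  assumes "f \<in> IX X"
  shows "pmult (sing_id y) (pmult f (pinv f)) = sing_id y \<longleftrightarrow> y \<in> ran f"
  unfolding pmult_def sing_id_def map_comp_def
  by (auto simp: fun_eq_iff pinv_Some[OF assms] pinv_None ran_def split: option.splits)

context
  fixes X :: "'a set" and T :: "('a \<Rightarrow> 'a option) topology"
  assumes T: "top_inverse_semigroup_IX X T"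
begin

lemma continuous_map_pmult:
  assumes "continuous_map A T p" and "continuous_map A T q"
  shows "continuous_map A T (\<lambda>a. pmult (p a) (q a))"
proof -
  have "continuous_map A (prod_topology T T) (\<lambda>a. (p a, q a))"
    using assms by (rule continuous_map_pairedI)
  then have "continuous_map A T ((\<lambda>(f, g). pmult f g) \<circ> (\<lambda>a. (p a, q a)))"
    using T continuous_map_compose unfolding top_inverse_semigroup_IX_def by blast
  then show ?thesis
    by (simp add: o_def)
qed

lemma continuous_map_pinv: "continuous_map A T p \<Longrightarrow> continuous_map A T (\<lambda>a. pinv (p a))"
  using continuous_map_compose[of A T p T pinv] T
  by (simp add: top_inverse_semigroup_IX_def o_def)

lemma continuous_map_id_to_tau_pp:
  assumes "Hausdorff_space T"
  shows "continuous_map T (tau_pp X) id"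
proof (rule continuous_map_into_tau_pp)
  have topspace_T: "topspace T = IX X"
    using T by (simp add: top_inverse_semigroup_IX_def)
  have t1: "t1_space T"
    using assms by (rule Hausdorff_imp_t1_space)
  have const: "continuous_map T T (\<lambda>_. sing_id a)" if "a \<in> X" for a
    using sing_id_IX[OF that] topspace_T by simp
  have id: "continuous_map T T (\<lambda>f. f)"
    by simp
  show "id f \<in> IX X" if "f \<in> topspace T" for f
    using that topspace_T by simp
  fix x
  assume x: "x \<in> X"
  show "openin T {f \<in> topspace T. id f x = c}" for c
  proof (cases c)
    case None
    have "openin T {f \<in> topspace T. pmult (pmult (pinv f) f) (sing_id x) \<noteq> sing_id x}"
      using topspace_T sing_id_IX[OF x]
      by (intro openin_continuous_map_preimage_neq[OF t1] continuous_map_pmult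
          continuous_map_pinv id const x) simp
    moreover have "{f \<in> topspace T. pmult (pmult (pinv f) f) (sing_id x) \<noteq> sing_id x}
        = {f \<in> topspace T. id f x = c}"
      using None topspace_T by (auto simp: domain_idempotent_fixes_sing_id_iff)
    ultimately show ?thesis
      by (simp only:)
  next
    case (Some y)
    show ?thesis
    proof (cases "y \<in> X")
      case True
      have "Map.empty \<in> IX X"
        by (rule IX_I) auto
      then have "openin T {f \<in> topspace T. pmult (sing_id y) (pmult f (sing_id x)) \<noteq> Map.empty}"
        using topspace_T
        by (intro openin_continuous_map_preimage_neq[OF t1] continuous_map_pmult
            id const x True) simp
      moreover have "{f \<in> topspace T. pmult (sing_id y) (pmult f (sing_id x)) \<noteq> Map.empty}
          = {f \<in> topspace T. id f x = c}"
        using Some by (auto simp: sandwich_sing_id_eq_empty_iff)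
      ultimately show ?thesis
        by (simp only:)
    next
      case False
      then have "{f \<in> topspace T. id f x = c} = {}"
        using Some topspace_T IX_ran_in by fastforce
      then show ?thesis
        by (metis openin_empty)
    qed
  qed
  have "openin T {f \<in> topspace T. pmult (sing_id x) (pmult f (pinv f)) \<noteq> sing_id x}"
    using topspace_T sing_id_IX[OF x]
    by (intro openin_continuous_map_preimage_neq[OF t1] continuous_map_pmult
        continuous_map_pinv id const x) simp
  moreover have "{f \<in> topspace T. pmult (sing_id x) (pmult f (pinv f)) \<noteq> sing_id x}
      = {f \<in> topspace T. x \<notin> ran (id f)}"
    using topspace_T by (auto simp: range_idempotent_fixes_sing_id_iff)
  ultimately show "openin T {f \<in> topspace T. x \<notin> ran (id f)}"
    by (simp only:)
qed

end

section \<open>The symmetric group of Y\<close>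

lemma topspace_Sinf_top [simp]: "topspace (Sinf_top Y) = Sinf Y"
proof -
  have "Sinf Y \<subseteq> (\<Pi>\<^sub>E i\<in>Y. Y)"
    unfolding Sinf_def by (auto simp: PiE_def Pi_def bij_betw_def)
  then show ?thesis
    unfolding Sinf_top_def by auto
qed

lemma Sinf_in: "f \<in> Sinf Y \<Longrightarrow> a \<in> Y \<Longrightarrow> f a \<in> Y"
  unfolding Sinf_def bij_betw_def by auto

lemma openin_Sinf_top_coordinate:
  assumes "a \<in> Y" and "B \<subseteq> Y"
  shows "openin (Sinf_top Y) {f \<in> Sinf Y. f a \<in> B}"
proof -
  let ?P = "product_topology (\<lambda>_. discrete_topology Y) Y"
  have "openin ?P {f \<in> topspace ?P. f a \<in> B}"
    using assms by (intro openin_continuous_map_preimage[OF continuous_map_product_projection]) auto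
  moreover have "{f \<in> Sinf Y. f a \<in> B} = {f \<in> topspace ?P. f a \<in> B} \<inter> Sinf Y"
    using topspace_Sinf_top[of Y] unfolding Sinf_top_def by auto
  ultimately show ?thesis
    unfolding Sinf_top_def openin_subtopology by blast
qed

lemma hat_IX:
  assumes "X \<subseteq> Y" and "f \<in> Sinf Y"
  shows "hat X f \<in> IX X"
  using assms unfolding Sinf_def bij_betw_def inj_on_def
  by (intro IX_I) (auto simp: hat_def split: if_splits)

lemma notin_ran_hat_iff:
  assumes "X \<subseteq> Y" and "f \<in> Sinf Y" and "x \<in> X"
  shows "x \<notin> ran (hat X f) \<longleftrightarrow> (\<exists>z\<in>Y - X. f z = x)"
proof -
  have bij: "bij_betw f Y Y"
    using assms(2) by (simp add: Sinf_def)
  then obtain z where "z \<in> Y" "f z = x"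
    using assms(1,3) by (metis bij_betw_imp_surj_on imageE subsetD)
  moreover have "z' = z" if "z' \<in> Y" "f z' = x" for z'
    using bij that \<open>z \<in> Y\<close> \<open>f z = x\<close> by (auto simp: bij_betw_def inj_on_def)
  ultimately show ?thesis
    using assms(1,3) by (auto simp: ran_def hat_def)
qed

lemma continuous_map_hat:
  assumes "X \<subseteq> Y"
  shows "continuous_map (Sinf_top Y) (tau_pp X) (hat X)"
proof (rule continuous_map_into_tau_pp)
  show "hat X f \<in> IX X" if "f \<in> topspace (Sinf_top Y)" for f
    using that hat_IX[OF assms] by simp
  fix x
  assume x: "x \<in> X"
  then have xY: "x \<in> Y"
    using assms by blast
  show "openin (Sinf_top Y) {f \<in> topspace (Sinf_top Y). hat X f x = c}" for c
  proof (cases c)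
    case None
    then have "{f \<in> topspace (Sinf_top Y). hat X f x = c} = {f \<in> Sinf Y. f x \<in> Y - X}"
      using x xY by (auto simp: hat_def Sinf_in)
    moreover have "openin (Sinf_top Y) {f \<in> Sinf Y. f x \<in> Y - X}"
      using openin_Sinf_top_coordinate[OF xY] by blast
    ultimately show ?thesis
      by (simp only:)
  next
    case (Some y)
    then have "{f \<in> topspace (Sinf_top Y). hat X f x = c} = {f \<in> Sinf Y. f x \<in> X \<inter> {y}}"
      using x by (auto simp: hat_def)
    moreover have "openin (Sinf_top Y) {f \<in> Sinf Y. f x \<in> X \<inter> {y}}"
      using openin_Sinf_top_coordinate[OF xY] assms by blast
    ultimately show ?thesis
      by (simp only:)
  qed
  have "{f \<in> topspace (Sinf_top Y). x \<notin> ran (hat X f)} = (\<Union>z\<in>Y - X. {f \<in> Sinf Y. f z \<in> {x}})"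
    using notin_ran_hat_iff[OF assms _ x] by auto
  moreover have "openin (Sinf_top Y) (\<Union>z\<in>Y - X. {f \<in> Sinf Y. f z \<in> {x}})"
    using xY openin_Sinf_top_coordinate[of _ Y "{x}"] by (intro openin_Union) auto
  ultimately show "openin (Sinf_top Y) {f \<in> topspace (Sinf_top Y). x \<notin> ran (hat X f)}"
    by simp
qed

section \<open>Extending partial bijections to permutations of Y\<close>

lemma continuous_map_into_discrete_topology:
  assumes "g \<in> topspace A \<rightarrow> Y"
    and "\<And>a. a \<in> topspace A \<Longrightarrow> \<exists>N. openin A N \<and> a \<in> N \<and> (\<forall>b\<in>N. g b = g a)"
  shows "continuous_map A (discrete_topology Y) g"
  unfolding continuous_map_def
proof (intro conjI allI impI)
  fix U
  show "openin A {a \<in> topspace A. g a \<in> U}"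
  proof (subst openin_subopen, intro ballI)
    fix a
    assume a: "a \<in> {a \<in> topspace A. g a \<in> U}"
    then obtain N where N: "openin A N" "a \<in> N" "\<forall>b\<in>N. g b = g a"
      using assms(2) by auto
    have "N \<subseteq> {a \<in> topspace A. g a \<in> U}"
    proof
      fix b
      assume "b \<in> N"
      then show "b \<in> {a \<in> topspace A. g a \<in> U}"
        using a N(3) openin_subset[OF N(1)] by (metis (mono_tags) mem_Collect_eq subsetD)
    qed
    then show "\<exists>N. openin A N \<and> a \<in> N \<and> N \<subseteq> {a \<in> topspace A. g a \<in> U}"
      using N by blast
  qed
qed (use assms(1) in auto)

locale embedding_into_complement =
  fixes k :: "'a \<Rightarrow> 'a" and X Y :: "'a set"
  assumes subset: "X \<subseteq> Y" and k_inj: "inj_on k X" and k_image: "k ` X \<subseteq> Y - X"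
begin

definition perm_ext :: "('a \<Rightarrow> 'a option) \<Rightarrow> 'a \<Rightarrow> 'a" where
  "perm_ext h a =
    (if a \<in> X then (case h a of Some b \<Rightarrow> b | None \<Rightarrow> k a)
     else if a \<in> k ` X then
       (case pinv h (inv_into X k a) of Some x \<Rightarrow> k x | None \<Rightarrow> inv_into X k a)
     else if a \<in> Y then a else undefined)"

lemma k_in_Y: "x \<in> X \<Longrightarrow> k x \<in> Y"
  using k_image by blast

lemma perm_ext_Some: "a \<in> X \<Longrightarrow> h a = Some b \<Longrightarrow> perm_ext h a = b"
  by (simp add: perm_ext_def)

lemma perm_ext_None: "a \<in> X \<Longrightarrow> h a = None \<Longrightarrow> perm_ext h a = k a"
  by (simp add: perm_ext_def)

lemma perm_ext_k_Some: "y \<in> X \<Longrightarrow> pinv h y = Some x \<Longrightarrow> perm_ext h (k y) = k x"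
  using k_inj k_image by (auto simp: perm_ext_def)

lemma perm_ext_k_None: "y \<in> X \<Longrightarrow> pinv h y = None \<Longrightarrow> perm_ext h (k y) = y"
  using k_inj k_image by (auto simp: perm_ext_def)

lemma perm_ext_other: "a \<notin> X \<Longrightarrow> a \<notin> k ` X \<Longrightarrow> perm_ext h a = (if a \<in> Y then a else undefined)"
  by (simp add: perm_ext_def)

lemma perm_ext_cong:
  "h' a = h a \<Longrightarrow> pinv h' (inv_into X k a) = pinv h (inv_into X k a) \<Longrightarrow> perm_ext h' a = perm_ext h a"
  by (simp add: perm_ext_def)

lemma perm_ext_in_Y:
  assumes h: "h \<in> IX X" and a: "a \<in> Y"
  shows "perm_ext h a \<in> Y"
proof -
  consider "a \<in> X" | y where "y \<in> X" "a = k y" | "a \<notin> X" "a \<notin> k ` X"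
    by blast
  then show ?thesis
  proof cases
    case 1
    then show ?thesis
      using k_in_Y subset IX_ran_in[OF h] by (cases "h a") (auto simp: perm_ext_Some perm_ext_None)
  next
    case (2 y)
    then show ?thesis
      using k_in_Y subset IX_ran_in[OF pinv_IX[OF h]]
      by (cases "pinv h y") (auto simp: perm_ext_k_Some perm_ext_k_None)
  qed (use a perm_ext_other in simp)
qed

lemma perm_ext_pinv_inverse:
  assumes h: "h \<in> IX X" and a: "a \<in> Y"
  shows "perm_ext (pinv h) (perm_ext h a) = a"
proof -
  consider "a \<in> X" | y where "y \<in> X" "a = k y" | "a \<notin> X" "a \<notin> k ` X"
    by blast
  then show ?thesis
  proof cases
    case 1
    then show ?thesis
      using pinv_pinv[OF h] pinv_Some[OF h] IX_ran_in[OF h]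
      by (cases "h a") (auto simp: perm_ext_Some perm_ext_None perm_ext_k_None)
  next
    case (2 y)
    then show ?thesis
      using pinv_pinv[OF h] pinv_Some[OF pinv_IX[OF h]] IX_ran_in[OF pinv_IX[OF h]]
      by (cases "pinv h y") (auto simp: perm_ext_k_Some perm_ext_k_None perm_ext_Some perm_ext_None)
  qed (use a perm_ext_other in simp)
qed

lemma perm_ext_Sinf:
  assumes h: "h \<in> IX X"
  shows "perm_ext h \<in> Sinf Y"
proof -
  have "perm_ext h \<in> extensional Y"
    using subset k_in_Y by (auto simp: extensional_def perm_ext_def)
  moreover have "bij_betw (perm_ext h) Y Y"
    using perm_ext_pinv_inverse[OF h] perm_ext_pinv_inverse[OF pinv_IX[OF h]] pinv_pinv[OF h]
      perm_ext_in_Y[OF h] perm_ext_in_Y[OF pinv_IX[OF h]]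
    by (intro bij_betw_byWitness[where f' = "perm_ext (pinv h)"]) auto
  ultimately show ?thesis
    by (simp add: Sinf_def)
qed

lemma hat_perm_ext:
  assumes h: "h \<in> IX X"
  shows "hat X (perm_ext h) = h"
proof
  fix a
  show "hat X (perm_ext h) a = h a"
    using k_image IX_ran_in[OF h] IX_outside[OF h]
    by (cases "a \<in> X"; cases "h a") (auto simp: hat_def perm_ext_Some perm_ext_None)
qed

lemma continuous_map_perm_ext: "continuous_map (tau_pp X) (Sinf_top Y) perm_ext"
  unfolding Sinf_top_def
proof (rule continuous_map_into_subtopology)
  show "perm_ext \<in> topspace (tau_pp X) \<rightarrow> Sinf Y"
    using perm_ext_Sinf by simp
  show "continuous_map (tau_pp X) (product_topology (\<lambda>_. discrete_topology Y) Y) perm_ext"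
    unfolding continuous_map_componentwise
  proof (intro conjI ballI)
    show "perm_ext ` topspace (tau_pp X) \<subseteq> extensional Y"
      using perm_ext_Sinf by (auto simp: Sinf_def)
    fix a
    assume a: "a \<in> Y"
    show "continuous_map (tau_pp X) (discrete_topology Y) (\<lambda>h. perm_ext h a)"
    proof (rule continuous_map_into_discrete_topology)
      show "(\<lambda>h. perm_ext h a) \<in> topspace (tau_pp X) \<rightarrow> Y"
        using perm_ext_in_Y a by simp
      fix h
      assume "h \<in> topspace (tau_pp X)"
      moreover define b where "b = inv_into X k a"
      moreover have "openin (tau_pp X) ({h' \<in> IX X. h' a = h a} \<inter> {h' \<in> IX X. pinv h' b = pinv h b})"
        by (intro openin_Int openin_tau_pp_app_eq openin_tau_pp_pinv_eq)
      ultimately show "\<exists>N. openin (tau_pp X) N \<and> h \<in> N \<and> (\<forall>h'\<in>N. perm_ext h' a = perm_ext h a)"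
        by (intro exI) (auto intro: perm_ext_cong)
    qed
  qed
qed

end

theorem theorem6p3:
  fixes X Y :: "'a set"
  assumes "X \<subseteq> Y"
    and "\<exists>h. inj_on h X \<and> h ` X \<subseteq> Y - X"
  shows "\<forall>T :: ('a \<Rightarrow> 'a option) topology.
           (Hausdorff_space T \<and> top_inverse_semigroup_IX X T \<and>
            continuous_map (Sinf_top Y) T (hat X))
           \<longleftrightarrow> T = tau_pp X"
proof (intro allI iffI)
  fix T :: "('a \<Rightarrow> 'a option) topology"
  assume "Hausdorff_space T \<and> top_inverse_semigroup_IX X T \<and> continuous_map (Sinf_top Y) T (hat X)"
  then have Hausdorff: "Hausdorff_space T" and semigroup: "top_inverse_semigroup_IX X T"
    and hat: "continuous_map (Sinf_top Y) T (hat X)"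
    by auto
  obtain k where "inj_on k X" "k ` X \<subseteq> Y - X"
    using assms(2) by blast
  then interpret embedding_into_complement k X Y
    using assms(1) by unfold_locales
  have "continuous_map (tau_pp X) T (hat X \<circ> perm_ext)"
    using continuous_map_perm_ext hat by (rule continuous_map_compose)
  then have "continuous_map (tau_pp X) T id"
    by (rule continuous_map_eq) (simp add: hat_perm_ext)
  moreover have "continuous_map T (tau_pp X) id"
    using semigroup Hausdorff by (rule continuous_map_id_to_tau_pp)
  ultimately show "T = tau_pp X"
    by (simp add: homeomorphic_maps_id[symmetric] homeomorphic_maps_def)
next
  fix T :: "('a \<Rightarrow> 'a option) topology"
  assume "T = tau_pp X"
  then show "Hausdorff_space T \<and> top_inverse_semigroup_IX X T \<and> continuous_map (Sinf_top Y) T (hat X)"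
    using Hausdorff_tau_pp[of X] top_inverse_semigroup_tau_pp[of X] continuous_map_hat[OF assms(1)]
    by simp
qed

end
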